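(* Let $D\subset\mathfrak{so}(7)$ be the Lie algebra of derivations of the octonions restricted to the imaginary octonions $\operatorname{Im}(\mathbb O)\cong\mathbb R^7$ (the 7-dimensional fundamental representation of $\mathfrak g_2$, realized by real antisymmetric $7\times7$ matrices), and let $\beta_1,\dots,\beta_{14}$ be a basis of $iD$ (Hermitian $7\times7$ matrices) with $\operatorname{Tr}(\beta_a\beta_b)=\frac12\delta_{ab}$. Then $\sum_{i=1}^{14}\beta_i^2=\mathbf 1_7$ and $\sum_{i=1}^{14}\beta_i\beta_a\beta_i=0$ for every $a$. Consequently, for $p\in[0,1]$ the $\mathfrak g_2$ channel $\Phi(\rho)=(1-p)\rho+p\sum_{i=1}^{14}\beta_i\rho\beta_i$ satisfies, for every $v\in\mathbb R^{14}$, $$\Phi\Big(\tfrac17(\mathbf 1_7+v\cdot\beta)\Big)=\tfrac17\big(\mathbf 1_7+(1-p)\,v\cdot\beta\big).$$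
   Context: $v\cdot\beta=\sum_{i=1}^{14}v_i\beta_i$. A derivation $D$ of an algebra satisfies $D(xy)=D(x)y+xD(y)$; $\mathfrak g_2$ is the derivation algebra of the octonions $\mathbb O$ and it preserves $\operatorname{Im}(\mathbb O)$. *)

theory Defs
  imports "HOL-Analysis.Analysis" "HOL-Library.Numeral_Type"
begin

text \<open>Octonions realised as R + Im(O) = real \<times> real^7, with imaginary units
  e_0,...,e_6 (indices in the ring Z/7 = type 7) and multiplication table
  e_n e_(n+1) = e_(n+3) (Fano plane), cyclically; e_n e_n = -1.\<close>

type_synonym octonion = "real \<times> (real^7)"

definition oct_pos_triple :: "7 \<Rightarrow> 7 \<Rightarrow> 7 \<Rightarrow> bool" where
  "oct_pos_triple i j k \<longleftrightarrow> (\<exists>n::7.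
      (i, j, k) = (n, n + 1, n + 3) \<or> (i, j, k) = (n + 1, n + 3, n) \<or> (i, j, k) = (n + 3, n, n + 1))"

definition oct_eps :: "7 \<Rightarrow> 7 \<Rightarrow> 7 \<Rightarrow> real" where
  "oct_eps i j k = (if oct_pos_triple i j k then 1 else if oct_pos_triple j i k then -1 else 0)"

definition cross7 :: "real^7 \<Rightarrow> real^7 \<Rightarrow> real^7" where
  "cross7 u w = (\<chi> k. \<Sum>i\<in>UNIV. \<Sum>j\<in>UNIV. oct_eps i j k * u$i * w$j)"

definition oct_mult :: "octonion \<Rightarrow> octonion \<Rightarrow> octonion" where
  "oct_mult x y = (fst x * fst y - inner (snd x) (snd y),
                   fst x *\<^sub>R snd y + fst y *\<^sub>R snd x + cross7 (snd x) (snd y))"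

definition oct_derivation :: "(octonion \<Rightarrow> octonion) \<Rightarrow> bool" where
  "oct_derivation D \<longleftrightarrow> linear D \<and>
     (\<forall>x y. D (oct_mult x y) = oct_mult (D x) y + oct_mult x (D y))"

definition g2_D :: "(real^7^7) set" where
  "g2_D = {A. \<exists>Der. oct_derivation Der \<and> (\<forall>x. Der (0, x) = (0, A *v x))}"

definition g2_iD :: "(complex^7^7) set" where
  "g2_iD = {(\<chi> r s. \<i> * complex_of_real (A$r$s)) | A. A \<in> g2_D}"

definition is_real_basis_of :: "(14 \<Rightarrow> complex^7^7) \<Rightarrow> (complex^7^7) set \<Rightarrow> bool" where
  "is_real_basis_of \<beta> V \<longleftrightarrow> (\<forall>i. \<beta> i \<in> V)
     \<and> (\<forall>X\<in>V. \<exists>c::14 \<Rightarrow> real. X = (\<Sum>i\<in>UNIV. c i *\<^sub>R \<beta> i))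
     \<and> (\<forall>c::14 \<Rightarrow> real. (\<Sum>i\<in>UNIV. c i *\<^sub>R \<beta> i) = 0 \<longrightarrow> (\<forall>i. c i = 0))"

definition vdot_beta :: "real^14 \<Rightarrow> (14 \<Rightarrow> complex^7^7) \<Rightarrow> complex^7^7" where
  "vdot_beta v \<beta> = (\<Sum>i\<in>UNIV. v$i *\<^sub>R \<beta> i)"

definition g2_channel :: "(14 \<Rightarrow> complex^7^7) \<Rightarrow> real \<Rightarrow> complex^7^7 \<Rightarrow> complex^7^7" where
  "g2_channel \<beta> p \<rho> = (1 - p) *\<^sub>R \<rho> + p *\<^sub>R (\<Sum>i\<in>UNIV. \<beta> i ** \<rho> ** \<beta> i)"

end

theory Submission
  imports Defs
begin

text \<open>A derivation of \<open>\<O>\<close> restricted to \<open>Im(\<O>) = \<real>\<^sup>7\<close> is a skew matrix whose entries satisfy seven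
  linear relations read off from the Fano-plane multiplication table, so \<open>D\<close> lies in the span of
  14 explicit integer matrices \<open>M\<^sub>j\<close> that are pairwise orthogonal for the trace form.
  If \<open>\<beta> = i A\<close> with \<open>A\<close> trace-orthonormal in \<open>D\<close>, the coefficients of the \<open>A\<^sub>a\<close> with respect to the \<open>M\<^sub>j\<close> form
  a square matrix that is orthogonal up to the weights \<open>tr(M\<^sub>j\<^sup>2)\<close>; hence \<open>\<Sum>\<^sub>a A\<^sub>a X A\<^sub>a\<close> equals a weighted
  sum \<open>\<Sum>\<^sub>j w\<^sub>j M\<^sub>j X M\<^sub>j\<close> that does not depend on the basis. For the explicit \<open>M\<^sub>j\<close> the identities
  \<open>\<Sum>\<^sub>j w\<^sub>j M\<^sub>j\<^sup>2 = -1\<close> and \<open>\<Sum>\<^sub>j w\<^sub>j M\<^sub>j M\<^sub>k M\<^sub>j = 0\<close> are checked by integer matrix computation, and the channel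
  formula follows by linearity.\<close>

lemma cases_7:
  fixes x :: 7
  shows "x = 0 \<or> x = 1 \<or> x = 2 \<or> x = 3 \<or> x = 4 \<or> x = 5 \<or> x = 6"
proof (induct x)
  case (of_int z)
  then have "z = 0 \<or> z = 1 \<or> z = 2 \<or> z = 3 \<or> z = 4 \<or> z = 5 \<or> z = 6"
    by fastforce
  then show ?case by auto
qed

lemma sum_UNIV_7: "sum f (UNIV::7 set) = f 0 + f 1 + f 2 + f 3 + f 4 + f 5 + f 6"
proof -
  have UNIV_eq: "(UNIV::7 set) = {0, 1, 2, 3, 4, 5, 6}"
    using cases_7 by auto
  show ?thesis
    unfolding UNIV_eq by (simp add: ac_simps)
qed

lemma numeral_7_reduce:
  "(7::7) = 0" "(8::7) = 1" "(9::7) = 2" "(10::7) = 3" "(11::7) = 4" "(12::7) = 5"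
  by simp_all

lemma all_7: "(\<forall>i::7. P i) \<longleftrightarrow> P 0 \<and> P 1 \<and> P 2 \<and> P 3 \<and> P 4 \<and> P 5 \<and> P 6"
  by (metis cases_7)

lemma cases_14:
  fixes x :: 14
  shows "x = 0 \<or> x = 1 \<or> x = 2 \<or> x = 3 \<or> x = 4 \<or> x = 5 \<or> x = 6 \<or> x = 7 \<or> x = 8 \<or> x = 9
    \<or> x = 10 \<or> x = 11 \<or> x = 12 \<or> x = 13"
proof (induct x)
  case (of_int z)
  then have "0 \<le> z" "z < 14" by simp_all
  then have "z = 0 \<or> z = 1 \<or> z = 2 \<or> z = 3 \<or> z = 4 \<or> z = 5 \<or> z = 6 \<or> z = 7 \<or> z = 8 \<or> z = 9
      \<or> z = 10 \<or> z = 11 \<or> z = 12 \<or> z = 13"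
    by presburger
  then show ?case by auto
qed

lemma sum_UNIV_14:
  "sum f (UNIV::14 set) = f 0 + f 1 + f 2 + f 3 + f 4 + f 5 + f 6 + f 7 + f 8 + f 9 + f 10 + f 11 + f 12 + f 13"
proof -
  have UNIV_eq: "(UNIV::14 set) = {0, 1, 2, 3, 4, 5, 6, 7, 8, 9, 10, 11, 12, 13}"
    using cases_14 by auto
  show ?thesis
    unfolding UNIV_eq by (simp add: ac_simps)
qed

definition index7 :: "7 \<Rightarrow> nat" where
  "index7 t = (if t = 0 then 0 else if t = 1 then 1 else if t = 2 then 2 else if t = 3 then 3
     else if t = 4 then 4 else if t = 5 then 5 else 6)"

lemma index7_simps [simp]:
  "index7 0 = 0" "index7 1 = 1" "index7 2 = 2" "index7 3 = 3" "index7 4 = 4" "index7 5 = 5" "index7 6 = 6"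
  by (simp_all add: index7_def)

lemma index7_less: "index7 t < 7"
  by (simp add: index7_def)

lemma index7_eq_iff: "index7 r = index7 s \<longleftrightarrow> r = s"
  using cases_7[of r] cases_7[of s] by auto

lemma sum_index7: "(\<Sum>t\<in>UNIV. f (index7 t)) = (\<Sum>n<7. f n)"
  by (simp add: sum_UNIV_7 eval_nat_numeral ac_simps)

definition index14 :: "14 \<Rightarrow> nat" where
  "index14 t = (if t = 0 then 0 else if t = 1 then 1 else if t = 2 then 2 else if t = 3 then 3
     else if t = 4 then 4 else if t = 5 then 5 else if t = 6 then 6 else if t = 7 then 7
     else if t = 8 then 8 else if t = 9 then 9 else if t = 10 then 10 else if t = 11 then 11
     else if t = 12 then 12 else 13)"

lemma index14_simps [simp]:
  "index14 0 = 0" "index14 1 = 1" "index14 2 = 2" "index14 3 = 3" "index14 4 = 4" "index14 5 = 5"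
  "index14 6 = 6" "index14 7 = 7" "index14 8 = 8" "index14 9 = 9" "index14 10 = 10"
  "index14 11 = 11" "index14 12 = 12" "index14 13 = 13"
  by (simp_all add: index14_def)

lemma index14_less: "index14 t < 14"
  by (simp add: index14_def)

lemma index14_eq_iff: "index14 r = index14 s \<longleftrightarrow> r = s"
  using cases_14[of r] cases_14[of s] by auto

lemma sum_index14: "(\<Sum>t\<in>UNIV. f (index14 t)) = (\<Sum>n<14. f n)"
  by (simp add: sum_UNIV_14 eval_nat_numeral ac_simps)

section \<open>Sandwich sums over orthogonal frames\<close>

lemma matrix_add_rdistrib: "((A::'a::semiring_1^'n^'m) + B) ** C = A ** C + B ** C"
  by (simp add: vec_eq_iff matrix_matrix_mult_def sum.distrib distrib_right)

lemma matrix_mult_sum_left: "(\<Sum>i\<in>S. f i) ** (C::'a::semiring_1^'k^'n) = (\<Sum>i\<in>S. f i ** C)"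
  by (induction S rule: infinite_finite_induct) (simp_all add: matrix_add_rdistrib)

lemma matrix_mult_sum_right: "(C::'a::semiring_1^'n^'m) ** (\<Sum>i\<in>S. f i) = (\<Sum>i\<in>S. C ** f i)"
  by (induction S rule: infinite_finite_induct) (simp_all add: matrix_add_ldistrib)

lemma trace_sum: "trace (\<Sum>i\<in>S. (f i::'a::comm_semiring_1^'n^'n)) = (\<Sum>i\<in>S. trace (f i))"
  by (induction S rule: infinite_finite_induct) (simp_all add: trace_add trace_0[simplified])

lemma trace_scaleR: "trace (c *\<^sub>R (A::real^'n^'n)) = c * trace A"
  by (simp add: trace_def sum_distrib_left)

lemma matrix_mult_uminus_left: "(- A) ** B = - (A ** (B::'a::ring_1^'k^'n))"
  by (simp add: vec_eq_iff matrix_matrix_mult_def sum_negf)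

lemma trace_uminus: "trace (- A) = - trace (A::'a::comm_ring_1^'n^'n)"
  by (simp add: trace_def sum_negf)

lemma sandwich_expand:
  fixes M :: "'j \<Rightarrow> real^'n^'n"
  shows "(\<Sum>j\<in>J. c j *\<^sub>R M j) ** X ** (\<Sum>k\<in>K. c' k *\<^sub>R M k)
     = (\<Sum>j\<in>J. \<Sum>k\<in>K. (c j * c' k) *\<^sub>R (M j ** X ** M k))"
  by (simp add: matrix_mult_sum_left matrix_mult_sum_right scalar_matrix_assoc[symmetric]
      matrix_scalar_ac scaleR_sum_right mult.commute sum.swap[of _ K])

lemma sandwich_sum_scaleR_sum:
  fixes L R N :: "'i \<Rightarrow> 'a::real_algebra_1^'n^'n"
  shows "(\<Sum>i\<in>I. L i ** (\<Sum>k\<in>K. c k *\<^sub>R N k) ** R i) = (\<Sum>k\<in>K. c k *\<^sub>R (\<Sum>i\<in>I. L i ** N k ** R i))"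
  by (simp add: matrix_mult_sum_left matrix_mult_sum_right scalar_matrix_assoc[symmetric]
      matrix_scalar_ac scaleR_sum_right sum.swap[of _ K])

lemma orthogonal_rows_imp_orthogonal_columns:
  fixes c :: "'n::finite \<Rightarrow> 'n \<Rightarrow> real"
  assumes rows: "\<And>a b. (\<Sum>j\<in>UNIV. c a j * c b j * g j) = (if a = b then d else 0)"
    and "d \<noteq> 0"
  shows "g j * (\<Sum>a\<in>UNIV. c a j * c a k) = (if j = k then d else 0)"
proof -
  define C :: "real^'n^'n" where "C = (\<chi> a j. c a j)"
  define D :: "real^'n^'n" where "D = (\<chi> j a. g j / d * c a j)"
  have "(\<Sum>j\<in>UNIV. c a j * (g j / d * c b j)) = (\<Sum>j\<in>UNIV. c a j * c b j * g j) / d" for a b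
    by (simp add: sum_divide_distrib mult_ac)
  then have "C ** D = mat 1"
    using rows \<open>d \<noteq> 0\<close> by (simp add: vec_eq_iff C_def D_def mat_def matrix_matrix_mult_def)
  then have "(D ** C) $ j $ k = mat 1 $ j $ k"
    using matrix_left_right_inverse by metis
  moreover have "(D ** C) $ j $ k = g j * (\<Sum>a\<in>UNIV. c a j * c a k) / d"
    by (simp add: C_def D_def matrix_matrix_mult_def sum_distrib_left sum_divide_distrib mult_ac)
  ultimately show ?thesis
    using \<open>d \<noteq> 0\<close> by (simp add: mat_def split: if_splits)
qed

lemma sandwich_sum_change_of_frame:
  fixes A M :: "'n::finite \<Rightarrow> real^'m^'m" and c :: "'n \<Rightarrow> 'n \<Rightarrow> real"
  assumes A_eq: "\<And>a. A a = (\<Sum>j\<in>UNIV. c a j *\<^sub>R M j)"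
    and A_orth: "\<And>a b. trace (A a ** A b) = (if a = b then d else 0)"
    and M_orth: "\<And>j k. trace (M j ** M k) = (if j = k then g j else 0)"
    and "d \<noteq> 0" and g_nonzero: "\<And>j. g j \<noteq> 0"
  shows "(\<Sum>a\<in>UNIV. A a ** X ** A a) = (\<Sum>j\<in>UNIV. (d / g j) *\<^sub>R (M j ** X ** M j))"
proof -
  have expand: "A a ** X ** A b = (\<Sum>j\<in>UNIV. \<Sum>k\<in>UNIV. (c a j * c b k) *\<^sub>R (M j ** X ** M k))"
    for a b X
    using sandwich_expand[of "c a" M UNIV X "c b" UNIV] by (simp add: A_eq)
  have rows: "(\<Sum>j\<in>UNIV. c a j * c b j * g j) = (if a = b then d else 0)" for a b
  proof -
    have "trace (A a ** A b) = (\<Sum>j\<in>UNIV. \<Sum>k\<in>UNIV. c a j * c b k * trace (M j ** M k))"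
      using expand[of a "mat 1" b] by (simp add: trace_sum trace_scaleR)
    also have "\<dots> = (\<Sum>j\<in>UNIV. c a j * c b j * g j)"
      by (simp add: M_orth if_distrib[of "\<lambda>x. _ * x"] cong: if_cong)
    finally show ?thesis
      using A_orth by simp
  qed
  have columns: "(\<Sum>a\<in>UNIV. c a j * c a k) = (if j = k then d / g j else 0)" for j k
    using orthogonal_rows_imp_orthogonal_columns[OF rows \<open>d \<noteq> 0\<close>, of j k] g_nonzero[of j]
    by (auto simp: eq_divide_eq mult.commute)
  have "(\<Sum>a\<in>UNIV. A a ** X ** A a)
      = (\<Sum>a\<in>UNIV. \<Sum>j\<in>UNIV. \<Sum>k\<in>UNIV. (c a j * c a k) *\<^sub>R (M j ** X ** M k))"
    by (simp only: expand)
  also have "\<dots> = (\<Sum>j\<in>UNIV. \<Sum>a\<in>UNIV. \<Sum>k\<in>UNIV. (c a j * c a k) *\<^sub>R (M j ** X ** M k))"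
    by (rule sum.swap)
  also have "\<dots> = (\<Sum>j\<in>UNIV. \<Sum>k\<in>UNIV. \<Sum>a\<in>UNIV. (c a j * c a k) *\<^sub>R (M j ** X ** M k))"
    by (rule sum.cong[OF refl], rule sum.swap)
  also have "\<dots> = (\<Sum>j\<in>UNIV. \<Sum>k\<in>UNIV. (\<Sum>a\<in>UNIV. c a j * c a k) *\<^sub>R (M j ** X ** M k))"
    by (simp only: scaleR_sum_left)
  also have "\<dots> = (\<Sum>j\<in>UNIV. (d / g j) *\<^sub>R (M j ** X ** M j))"
    by (simp add: columns if_distrib[of "\<lambda>x. x *\<^sub>R _"] cong: if_cong)
  finally show ?thesis .
qed

section \<open>Derivations of the octonions\<close>

lemma cross7_zero_left [simp]: "cross7 0 w = 0"
  and cross7_zero_right [simp]: "cross7 u 0 = 0"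
  by (simp_all add: cross7_def vec_eq_iff)

lemma oct_derivation_one:
  assumes "oct_derivation Der"
  shows "Der (1, 0) = 0"
proof -
  have unit: "oct_mult (1, 0) x = x" "oct_mult x (1, 0) = x" for x
    by (simp_all add: oct_mult_def prod_eq_iff)
  have "Der (oct_mult (1, 0) (1, 0)) = oct_mult (Der (1, 0)) (1, 0) + oct_mult (1, 0) (Der (1, 0))"
    using assms by (simp add: oct_derivation_def)
  then show ?thesis
    by (simp add: unit)
qed

lemma g2_D_derivation_rules:
  assumes "A \<in> g2_D"
  shows g2_D_cross7: "A *v cross7 u w = cross7 (A *v u) w + cross7 u (A *v w)"
    and g2_D_skew: "inner (A *v u) w + inner u (A *v w) = 0"
proof -
  obtain Der where Der: "oct_derivation Der" and Der_Im: "\<And>x. Der (0, x) = (0, A *v x)"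
    using assms by (auto simp: g2_D_def)
  have "linear Der"
    using Der by (simp add: oct_derivation_def)
  have "oct_mult (0, u) (0, w) = (- inner u w) *\<^sub>R (1, 0) + (0, cross7 u w)"
    by (simp add: oct_mult_def)
  then have "Der (oct_mult (0, u) (0, w)) = Der ((- inner u w) *\<^sub>R (1, 0) + (0, cross7 u w))"
    by (simp only:)
  also have "\<dots> = (- inner u w) *\<^sub>R Der (1, 0) + Der (0, cross7 u w)"
    using \<open>linear Der\<close> by (simp only: linear_add linear_scale)
  also have "\<dots> = (0, A *v cross7 u w)"
    using oct_derivation_one[OF Der] Der_Im by simp
  finally have "(0, A *v cross7 u w) = oct_mult (Der (0, u)) (0, w) + oct_mult (0, u) (Der (0, w))"
    using Der by (simp add: oct_derivation_def)
  then show "A *v cross7 u w = cross7 (A *v u) w + cross7 u (A *v w)"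
    and "inner (A *v u) w + inner u (A *v w) = 0"
    by (simp_all add: Der_Im oct_mult_def prod_eq_iff)
qed

lemma matrix_vector_mult_axis_component: "(A *v axis a 1) $ b = A $ b $ a"
  for A :: "real^'n^'m"
  by (simp add: matrix_vector_mult_basis column_def)

lemma g2_D_antisym:
  assumes "A \<in> g2_D"
  shows "A $ a $ b = - A $ b $ a"
  using g2_D_skew[OF assms, of "axis b 1" "axis a 1"]
  by (simp add: inner_axis inner_axis' matrix_vector_mult_axis_component)

lemma cross7_axis_left: "cross7 (axis a 1) w $ l = (\<Sum>j\<in>UNIV. oct_eps a j l * w $ j)"
proof -
  have "cross7 (axis a 1) w $ l = (\<Sum>i\<in>UNIV. if i = a then (\<Sum>j\<in>UNIV. oct_eps a j l * w $ j) else 0)"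
    unfolding cross7_def vec_lambda_beta by (intro sum.cong refl) (simp add: axis_def)
  then show ?thesis by simp
qed

lemma cross7_axis_right: "cross7 u (axis b 1) $ l = (\<Sum>i\<in>UNIV. oct_eps i b l * u $ i)"
proof -
  have "cross7 u (axis b 1) $ l
      = (\<Sum>i\<in>UNIV. \<Sum>j\<in>UNIV. if j = b then oct_eps i b l * u $ i else 0)"
    unfolding cross7_def vec_lambda_beta by (intro sum.cong refl) (simp add: axis_def)
  then show ?thesis by simp
qed

lemma g2_D_oct_eps:
  assumes "A \<in> g2_D"
  shows "(\<Sum>k\<in>UNIV. A $ l $ k * oct_eps a b k)
    = (\<Sum>i\<in>UNIV. oct_eps i b l * A $ i $ a) + (\<Sum>j\<in>UNIV. oct_eps a j l * A $ j $ b)"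
proof -
  have "cross7 (axis a 1) (axis b 1) $ k = (\<Sum>j\<in>UNIV. if j = b then oct_eps a b k else 0)" for k
    unfolding cross7_axis_left by (intro sum.cong refl) (simp add: axis_def)
  then have "(A *v cross7 (axis a 1) (axis b 1)) $ l = (\<Sum>k\<in>UNIV. A $ l $ k * oct_eps a b k)"
    by (simp add: matrix_vector_mult_def)
  moreover have "(A *v cross7 (axis a 1) (axis b 1)) $ l
      = cross7 (A *v axis a 1) (axis b 1) $ l + cross7 (axis a 1) (A *v axis b 1) $ l"
    using g2_D_cross7[OF assms] by simp
  ultimately show ?thesis
    by (simp only: cross7_axis_left cross7_axis_right matrix_vector_mult_axis_component)
qed

lemma oct_pos_triple_iff:
  "oct_pos_triple i j k \<longleftrightarrow> (j = i + 1 \<and> k = i + 3) \<or> (j = i + 2 \<and> k = i + 6) \<or> (j = i + 4 \<and> k = i + 5)"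
  unfolding oct_pos_triple_def
  by (auto simp: add.assoc numeral_7_reduce intro: exI[of _ i] exI[of _ "i + 6"] exI[of _ "i + 4"])

lemma g2_D_antisym_entries:
  assumes "A \<in> g2_D"
  shows "A$0$0 = 0" "A$1$1 = 0" "A$2$2 = 0" "A$3$3 = 0" "A$4$4 = 0" "A$5$5 = 0" "A$6$6 = 0"
    "A$1$0 = - A$0$1" "A$2$0 = - A$0$2" "A$3$0 = - A$0$3" "A$4$0 = - A$0$4" "A$5$0 = - A$0$5"
    "A$6$0 = - A$0$6" "A$2$1 = - A$1$2" "A$3$1 = - A$1$3" "A$4$1 = - A$1$4" "A$5$1 = - A$1$5"
    "A$6$1 = - A$1$6" "A$3$2 = - A$2$3" "A$4$2 = - A$2$4" "A$5$2 = - A$2$5" "A$6$2 = - A$2$6"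
    "A$4$3 = - A$3$4" "A$5$3 = - A$3$5" "A$6$3 = - A$3$6" "A$5$4 = - A$4$5" "A$6$4 = - A$4$6"
    "A$6$5 = - A$5$6"
  using g2_D_antisym[OF assms] by (metis neg_equal_zero)+

text \<open>Together with antisymmetry these relations cut the 21-dimensional so(7) down to 14 dimensions.\<close>

lemma g2_D_relations:
  assumes "A \<in> g2_D"
  shows "A$1$3 = - A$4$5 - A$2$6" "A$2$4 = - A$5$6 + A$0$3" "A$3$5 = A$0$6 + A$1$4"
    "A$4$6 = - A$0$1 + A$2$5" "A$0$5 = A$1$2 - A$3$6" "A$1$6 = A$2$3 + A$0$4"
    "A$0$2 = - A$3$4 - A$1$5"
  using g2_D_oct_eps[OF assms, of 5 1 2] g2_D_oct_eps[OF assms, of 5 0 2]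
    g2_D_oct_eps[OF assms, of 5 0 1] g2_D_oct_eps[OF assms, of 4 0 2]
    g2_D_oct_eps[OF assms, of 6 0 1] g2_D_oct_eps[OF assms, of 2 0 1]
    g2_D_oct_eps[OF assms, of 4 0 1]
  by (simp_all add: sum_UNIV_7 oct_eps_def oct_pos_triple_iff g2_D_antisym_entries[OF assms])

section \<open>Fourteen trace-orthogonal generators\<close>

text \<open>Computations are done on integer \<open>7 \<times> 7\<close> matrices given as lists of rows, evaluated by
  \<open>code_simp\<close>, and transferred to \<open>real^7^7\<close> along \<open>of_lmat\<close>.\<close>

definition lmat_mult :: "int list list \<Rightarrow> int list list \<Rightarrow> int list list" where
  "lmat_mult A B = map (\<lambda>row. map (\<lambda>j. sum_list (map2 (*) row (map (\<lambda>r. r ! j) B))) [0..<7]) A"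

definition lmat_add :: "int list list \<Rightarrow> int list list \<Rightarrow> int list list" where
  "lmat_add A B = map2 (map2 (+)) A B"

definition lmat_smult :: "int \<Rightarrow> int list list \<Rightarrow> int list list" where
  "lmat_smult c A = map (map ((*) c)) A"

definition lmat_zero :: "int list list" where
  "lmat_zero = replicate 7 (replicate 7 0)"

definition lmat_one :: "int list list" where
  "lmat_one = map (\<lambda>i. map (\<lambda>j. if i = j then 1 else 0) [0..<7]) [0..<7]"

definition lmat_sum :: "(nat \<Rightarrow> int list list) \<Rightarrow> nat \<Rightarrow> int list list" where
  "lmat_sum f n = foldl (\<lambda>acc i. lmat_add acc (f i)) lmat_zero [0..<n]"

definition lmat_trace :: "int list list \<Rightarrow> int" where
  "lmat_trace A = sum_list (map (\<lambda>i. A ! i ! i) [0..<7])"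

definition lmat_wf :: "int list list \<Rightarrow> bool" where
  "lmat_wf A \<longleftrightarrow> length A = 7 \<and> (\<forall>row\<in>set A. length row = 7)"

definition of_lmat :: "int list list \<Rightarrow> real^7^7" where
  "of_lmat A = (\<chi> r s. of_int (A ! index7 r ! index7 s))"

lemma of_lmat_component: "of_lmat A $ r $ s = of_int (A ! index7 r ! index7 s)"
  by (simp add: of_lmat_def)

lemma lmat_wf_mult: "lmat_wf A \<Longrightarrow> lmat_wf (lmat_mult A B)"
  by (auto simp: lmat_wf_def lmat_mult_def)

lemma lmat_wf_add: "lmat_wf A \<Longrightarrow> lmat_wf B \<Longrightarrow> lmat_wf (lmat_add A B)"
  by (auto simp: lmat_wf_def lmat_add_def set_zip)

lemma lmat_wf_smult: "lmat_wf A \<Longrightarrow> lmat_wf (lmat_smult c A)"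
  by (auto simp: lmat_wf_def lmat_smult_def)

lemma sum_list_map2_mult:
  assumes "length xs = n" "length ys = n"
  shows "sum_list (map2 (*) xs ys) = (\<Sum>i<n. xs ! i * ys ! i)"
  using assms by (simp add: sum_list_sum_nth atLeast0LessThan)

lemma of_lmat_mult:
  assumes "lmat_wf A" "lmat_wf B"
  shows "of_lmat A ** of_lmat B = of_lmat (lmat_mult A B)"
proof -
  have "(of_lmat A ** of_lmat B) $ r $ s
      = (\<Sum>t\<in>UNIV. real_of_int (A ! index7 r ! index7 t * B ! index7 t ! index7 s))" for r s
    by (simp add: matrix_matrix_mult_def of_lmat_component)
  also have "\<dots> r s = (\<Sum>n<7. real_of_int (A ! index7 r ! n * B ! n ! index7 s))" for r s
    by (rule sum_index7)
  also have "\<dots> r s = of_lmat (lmat_mult A B) $ r $ s" for r s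
    using assms by (simp add: of_lmat_component lmat_mult_def lmat_wf_def sum_list_map2_mult index7_less)
  finally show ?thesis
    by (simp add: vec_eq_iff)
qed

lemma of_lmat_add: "lmat_wf A \<Longrightarrow> lmat_wf B \<Longrightarrow> of_lmat A + of_lmat B = of_lmat (lmat_add A B)"
  by (simp add: vec_eq_iff of_lmat_component lmat_add_def lmat_wf_def index7_less)

lemma of_lmat_smult: "lmat_wf A \<Longrightarrow> of_int c *\<^sub>R of_lmat A = of_lmat (lmat_smult c A)"
  by (simp add: vec_eq_iff of_lmat_component lmat_smult_def lmat_wf_def index7_less)

lemma of_lmat_zero: "of_lmat lmat_zero = 0"
  by (simp add: vec_eq_iff of_lmat_component lmat_zero_def index7_less)

lemma of_lmat_one: "of_lmat lmat_one = mat 1"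
  by (simp add: vec_eq_iff of_lmat_component lmat_one_def mat_def index7_less index7_eq_iff)

lemma of_lmat_lmat_sum:
  assumes "\<And>i. i < n \<Longrightarrow> lmat_wf (f i)"
  shows "lmat_wf (lmat_sum f n) \<and> of_lmat (lmat_sum f n) = (\<Sum>i<n. of_lmat (f i))"
  using assms
proof (induction n)
  case 0
  show ?case
    by (simp add: lmat_sum_def lmat_wf_def lmat_zero_def of_lmat_zero[unfolded lmat_zero_def])
next
  case (Suc n)
  then show ?case
    by (simp add: lmat_sum_def lmat_wf_add of_lmat_add[symmetric])
qed

lemma trace_of_lmat: "trace (of_lmat A) = of_int (lmat_trace A)"
proof -
  have "trace (of_lmat A) = (\<Sum>t\<in>UNIV. real_of_int (A ! index7 t ! index7 t))"
    by (simp add: trace_def of_lmat_component)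
  also have "\<dots> = (\<Sum>n<7. real_of_int (A ! n ! n))"
    by (rule sum_index7)
  finally show ?thesis
    by (simp add: lmat_trace_def sum_list_sum_nth atLeast0LessThan)
qed

text \<open>With \<open>E(a,b)\<close> the generator of rotations in the \<open>(e\<^sub>a,e\<^sub>b)\<close>-plane (entry \<open>1\<close> at \<open>(a,b)\<close>,
  \<open>-1\<close> at \<open>(b,a)\<close>) and indices mod 7, the matrix number \<open>2k\<close> is \<open>E(k+4,k+5) - E(k+1,k+3)\<close> and
  number \<open>2k+1\<close> is \<open>E(k+1,k+3) + E(k+4,k+5) - 2 E(k+2,k+6)\<close>; the three planes are those of the
  Fano lines through \<open>k\<close>.\<close>

definition g2_gen_lmats :: "int list list list" where
  "g2_gen_lmats =
  [[[0, 0, 0, 0, 0, 0, 0], [0, 0, 0, -1, 0, 0, 0], [0, 0, 0, 0, 0, 0, 0], [0, 1, 0, 0, 0, 0, 0], [0, 0, 0, 0, 0, 1, 0], [0, 0, 0, 0, -1, 0, 0], [0, 0, 0, 0, 0, 0, 0]],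
   [[0, 0, 0, 0, 0, 0, 0], [0, 0, 0, 1, 0, 0, 0], [0, 0, 0, 0, 0, 0, -2], [0, -1, 0, 0, 0, 0, 0], [0, 0, 0, 0, 0, 1, 0], [0, 0, 0, 0, -1, 0, 0], [0, 0, 2, 0, 0, 0, 0]],
   [[0, 0, 0, 0, 0, 0, 0], [0, 0, 0, 0, 0, 0, 0], [0, 0, 0, 0, -1, 0, 0], [0, 0, 0, 0, 0, 0, 0], [0, 0, 1, 0, 0, 0, 0], [0, 0, 0, 0, 0, 0, 1], [0, 0, 0, 0, 0, -1, 0]],
   [[0, 0, 0, 2, 0, 0, 0], [0, 0, 0, 0, 0, 0, 0], [0, 0, 0, 0, 1, 0, 0], [-2, 0, 0, 0, 0, 0, 0], [0, 0, -1, 0, 0, 0, 0], [0, 0, 0, 0, 0, 0, 1], [0, 0, 0, 0, 0, -1, 0]],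
   [[0, 0, 0, 0, 0, 0, -1], [0, 0, 0, 0, 0, 0, 0], [0, 0, 0, 0, 0, 0, 0], [0, 0, 0, 0, 0, -1, 0], [0, 0, 0, 0, 0, 0, 0], [0, 0, 0, 1, 0, 0, 0], [1, 0, 0, 0, 0, 0, 0]],
   [[0, 0, 0, 0, 0, 0, -1], [0, 0, 0, 0, 2, 0, 0], [0, 0, 0, 0, 0, 0, 0], [0, 0, 0, 0, 0, 1, 0], [0, -2, 0, 0, 0, 0, 0], [0, 0, 0, -1, 0, 0, 0], [1, 0, 0, 0, 0, 0, 0]],
   [[0, 1, 0, 0, 0, 0, 0], [-1, 0, 0, 0, 0, 0, 0], [0, 0, 0, 0, 0, 0, 0], [0, 0, 0, 0, 0, 0, 0], [0, 0, 0, 0, 0, 0, -1], [0, 0, 0, 0, 0, 0, 0], [0, 0, 0, 0, 1, 0, 0]],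
   [[0, 1, 0, 0, 0, 0, 0], [-1, 0, 0, 0, 0, 0, 0], [0, 0, 0, 0, 0, 2, 0], [0, 0, 0, 0, 0, 0, 0], [0, 0, 0, 0, 0, 0, 1], [0, 0, -2, 0, 0, 0, 0], [0, 0, 0, 0, -1, 0, 0]],
   [[0, 0, 0, 0, 0, 1, 0], [0, 0, 1, 0, 0, 0, 0], [0, -1, 0, 0, 0, 0, 0], [0, 0, 0, 0, 0, 0, 0], [0, 0, 0, 0, 0, 0, 0], [-1, 0, 0, 0, 0, 0, 0], [0, 0, 0, 0, 0, 0, 0]],
   [[0, 0, 0, 0, 0, -1, 0], [0, 0, 1, 0, 0, 0, 0], [0, -1, 0, 0, 0, 0, 0], [0, 0, 0, 0, 0, 0, 2], [0, 0, 0, 0, 0, 0, 0], [1, 0, 0, 0, 0, 0, 0], [0, 0, 0, -2, 0, 0, 0]],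
   [[0, 0, 0, 0, 0, 0, 0], [0, 0, 0, 0, 0, 0, 1], [0, 0, 0, 1, 0, 0, 0], [0, 0, -1, 0, 0, 0, 0], [0, 0, 0, 0, 0, 0, 0], [0, 0, 0, 0, 0, 0, 0], [0, -1, 0, 0, 0, 0, 0]],
   [[0, 0, 0, 0, -2, 0, 0], [0, 0, 0, 0, 0, 0, -1], [0, 0, 0, 1, 0, 0, 0], [0, 0, -1, 0, 0, 0, 0], [2, 0, 0, 0, 0, 0, 0], [0, 0, 0, 0, 0, 0, 0], [0, 1, 0, 0, 0, 0, 0]],
   [[0, 0, -1, 0, 0, 0, 0], [0, 0, 0, 0, 0, 0, 0], [1, 0, 0, 0, 0, 0, 0], [0, 0, 0, 0, 1, 0, 0], [0, 0, 0, -1, 0, 0, 0], [0, 0, 0, 0, 0, 0, 0], [0, 0, 0, 0, 0, 0, 0]],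
   [[0, 0, 1, 0, 0, 0, 0], [0, 0, 0, 0, 0, -2, 0], [-1, 0, 0, 0, 0, 0, 0], [0, 0, 0, 0, 1, 0, 0], [0, 0, 0, -1, 0, 0, 0], [0, 2, 0, 0, 0, 0, 0], [0, 0, 0, 0, 0, 0, 0]]]"

lemma g2_gen_lmats_wf: "list_all (\<lambda>n. lmat_wf (g2_gen_lmats ! n)) [0..<14]"
  by code_simp

lemma g2_gen_lmats_trace:
  "list_all (\<lambda>a. list_all (\<lambda>b. lmat_trace (lmat_mult (g2_gen_lmats ! a) (g2_gen_lmats ! b))
     = (if a = b then if even a then -4 else -12 else 0)) [0..<14]) [0..<14]"
  by code_simp

lemma g2_gen_lmats_casimir:
  "lmat_sum (\<lambda>n. lmat_smult (if even n then 3 else 1)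
     (lmat_mult (g2_gen_lmats ! n) (g2_gen_lmats ! n))) 14 = lmat_smult (-24) lmat_one"
  by code_simp

lemma g2_gen_lmats_casimir_sandwich:
  "list_all (\<lambda>k. lmat_sum (\<lambda>n. lmat_smult (if even n then 3 else 1)
     (lmat_mult (lmat_mult (g2_gen_lmats ! n) (g2_gen_lmats ! k)) (g2_gen_lmats ! n))) 14 = lmat_zero)
     [0..<14]"
  by code_simp

definition g2_gen :: "14 \<Rightarrow> real^7^7" where
  "g2_gen j = of_lmat (g2_gen_lmats ! index14 j)"

definition g2_casimir_weight :: "14 \<Rightarrow> real" where
  "g2_casimir_weight j = (if even (index14 j) then 3 else 1) / 24"

lemma lmat_wf_g2_gen_lmats: "n < 14 \<Longrightarrow> lmat_wf (g2_gen_lmats ! n)"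
  using g2_gen_lmats_wf by (simp add: list_all_iff)

lemma trace_g2_gen_mult:
  "trace (g2_gen j ** g2_gen k) = (if j = k then if even (index14 j) then -4 else -12 else 0)"
  using g2_gen_lmats_trace index14_less[of j] index14_less[of k]
  by (simp add: g2_gen_def of_lmat_mult lmat_wf_g2_gen_lmats trace_of_lmat list_all_iff index14_eq_iff)

lemma sum_g2_casimir_weight_of_lmat:
  assumes "\<And>n. n < 14 \<Longrightarrow> lmat_wf (F n)"
  shows "(\<Sum>j\<in>UNIV. g2_casimir_weight j *\<^sub>R of_lmat (F (index14 j)))
    = (1/24) *\<^sub>R of_lmat (lmat_sum (\<lambda>n. lmat_smult (if even n then 3 else 1) (F n)) 14)"
proof -
  define G where "G = (\<lambda>n. lmat_smult (if even n then 3 else 1) (F n))"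
  have "g2_casimir_weight j *\<^sub>R of_lmat (F (index14 j)) = (1/24) *\<^sub>R of_lmat (G (index14 j))" for j
    using assms[OF index14_less[of j]]
    by (simp add: g2_casimir_weight_def G_def of_lmat_smult[symmetric])
  then have "(\<Sum>j\<in>UNIV. g2_casimir_weight j *\<^sub>R of_lmat (F (index14 j)))
      = (1/24) *\<^sub>R (\<Sum>n<14. of_lmat (G n))"
    by (simp add: scaleR_sum_right[symmetric] sum_index14[where f = "\<lambda>n. of_lmat (G n)"])
  also have "\<dots> = (1/24) *\<^sub>R of_lmat (lmat_sum G 14)"
    using of_lmat_lmat_sum[of 14 G] assms by (simp add: G_def lmat_wf_smult)
  finally show ?thesis
    by (simp only: G_def)
qed

lemma g2_gen_casimir: "(\<Sum>j\<in>UNIV. g2_casimir_weight j *\<^sub>R (g2_gen j ** g2_gen j)) = - mat 1"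
proof -
  have "lmat_wf lmat_one"
    by (simp add: lmat_wf_def lmat_one_def)
  then show ?thesis
    using sum_g2_casimir_weight_of_lmat[of "\<lambda>n. lmat_mult (g2_gen_lmats ! n) (g2_gen_lmats ! n)"]
    by (simp add: g2_gen_def of_lmat_mult lmat_wf_g2_gen_lmats index14_less lmat_wf_mult
        g2_gen_lmats_casimir of_lmat_smult[symmetric] of_lmat_one)
qed

lemma g2_gen_casimir_sandwich:
  "(\<Sum>j\<in>UNIV. g2_casimir_weight j *\<^sub>R (g2_gen j ** g2_gen k ** g2_gen j)) = 0"
  using sum_g2_casimir_weight_of_lmat[of
      "\<lambda>n. lmat_mult (lmat_mult (g2_gen_lmats ! n) (g2_gen_lmats ! index14 k)) (g2_gen_lmats ! n)"]
    g2_gen_lmats_casimir_sandwich index14_less[of k]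
  by (simp add: g2_gen_def of_lmat_mult lmat_wf_g2_gen_lmats index14_less lmat_wf_mult
      list_all_iff of_lmat_zero)

section \<open>Orthonormal families in the derivation algebra\<close>

lemma g2_D_in_span:
  assumes "A \<in> g2_D"
  shows "\<exists>c. A = (\<Sum>j\<in>UNIV. c j *\<^sub>R g2_gen j)"
proof
  define c where "c j = (let n = index14 j; k = (of_nat (n div 2) :: 7) in
    if even n then A$(k+4)$(k+5) + A$(k+2)$(k+6) / 2 else - A$(k+2)$(k+6) / 2)" for j
  show "A = (\<Sum>j\<in>UNIV. c j *\<^sub>R g2_gen j)"
    unfolding vec_eq_iff all_7
    by (simp add: sum_component sum_UNIV_14 g2_gen_def of_lmat_component g2_gen_lmats_def c_def Let_def
        numeral_7_reduce g2_D_antisym_entries[OF assms] g2_D_relations[OF assms])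
qed

lemma g2_D_orthonormal_casimir:
  fixes A :: "14 \<Rightarrow> real^7^7"
  assumes in_D: "\<And>a. A a \<in> g2_D"
    and orth: "\<And>a b. trace (A a ** A b) = (if a = b then -1/2 else 0)"
  shows "(\<Sum>a\<in>UNIV. A a ** A a) = - mat 1"
    and "(\<Sum>a\<in>UNIV. A a ** A b ** A a) = 0"
proof -
  obtain c where c: "\<And>a. A a = (\<Sum>j\<in>UNIV. c a j *\<^sub>R g2_gen j)"
    using g2_D_in_span[OF in_D] by metis
  have weight: "(-1/2) / (if even (index14 j) then -4 else -12) = g2_casimir_weight j" for j
    by (simp add: g2_casimir_weight_def)
  have "(\<Sum>a\<in>UNIV. A a ** X ** A a)
      = (\<Sum>j\<in>UNIV. ((-1/2) / (if even (index14 j) then -4 else -12)) *\<^sub>R (g2_gen j ** X ** g2_gen j))"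
    for X
    by (rule sandwich_sum_change_of_frame[OF c orth trace_g2_gen_mult]) simp_all
  then have sandwich: "(\<Sum>a\<in>UNIV. A a ** X ** A a)
      = (\<Sum>j\<in>UNIV. (g2_casimir_weight j *\<^sub>R g2_gen j) ** X ** g2_gen j)" for X
    by (simp only: weight scalar_matrix_assoc)
  show "(\<Sum>a\<in>UNIV. A a ** A a) = - mat 1"
    using sandwich[of "mat 1"] g2_gen_casimir by (simp add: scalar_matrix_assoc)
  have "(\<Sum>a\<in>UNIV. A a ** A b ** A a)
      = (\<Sum>k\<in>UNIV. c b k *\<^sub>R (\<Sum>j\<in>UNIV. (g2_casimir_weight j *\<^sub>R g2_gen j) ** g2_gen k ** g2_gen j))"
    unfolding sandwich c[of b] by (rule sandwich_sum_scaleR_sum)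
  then show "(\<Sum>a\<in>UNIV. A a ** A b ** A a) = 0"
    using g2_gen_casimir_sandwich by (simp add: scalar_matrix_assoc)
qed

section \<open>Complexification\<close>

definition cmat :: "real^'n^'m \<Rightarrow> complex^'n^'m" where
  "cmat X = (\<chi> r s. complex_of_real (X$r$s))"

definition icmat :: "real^'n^'m \<Rightarrow> complex^'n^'m" where
  "icmat X = (\<chi> r s. \<i> * complex_of_real (X$r$s))"

lemma icmat_mult_icmat: "icmat X ** icmat Y = - cmat (X ** Y)"
proof -
  have "(icmat X ** icmat Y) $ r $ s = (\<Sum>t\<in>UNIV. - complex_of_real (X$r$t * Y$t$s))" for r s
    unfolding matrix_matrix_mult_def icmat_def vec_lambda_beta
    by (intro sum.cong refl) (simp add: mult.assoc mult.left_commute)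
  then show ?thesis
    by (simp add: vec_eq_iff cmat_def matrix_matrix_mult_def sum_negf)
qed

lemma cmat_mult_icmat: "cmat X ** icmat Y = icmat (X ** Y)"
proof -
  have "(cmat X ** icmat Y) $ r $ s = (\<Sum>t\<in>UNIV. \<i> * complex_of_real (X$r$t * Y$t$s))" for r s
    unfolding matrix_matrix_mult_def cmat_def icmat_def vec_lambda_beta
    by (intro sum.cong refl) (simp add: mult.left_commute)
  then show ?thesis
    by (simp add: vec_eq_iff icmat_def matrix_matrix_mult_def sum_distrib_left)
qed

lemma cmat_uminus: "cmat (- X) = - cmat X"
  by (simp add: cmat_def vec_eq_iff)

lemma cmat_one: "cmat (mat 1) = mat 1"
  by (simp add: cmat_def mat_def vec_eq_iff)

lemma icmat_zero: "icmat 0 = 0"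
  by (simp add: icmat_def vec_eq_iff)

lemma cmat_sum: "cmat (\<Sum>i\<in>S. f i) = (\<Sum>i\<in>S. cmat (f i))"
  by (induction S rule: infinite_finite_induct) (simp_all add: cmat_def vec_eq_iff)

lemma icmat_sum: "icmat (\<Sum>i\<in>S. f i) = (\<Sum>i\<in>S. icmat (f i))"
  by (induction S rule: infinite_finite_induct) (simp_all add: icmat_def vec_eq_iff distrib_left)

lemma trace_cmat: "trace (cmat X) = complex_of_real (trace X)"
  by (simp add: trace_def cmat_def)

lemma g2_iD_orthonormal_casimir:
  fixes \<beta> :: "14 \<Rightarrow> complex^7^7"
  assumes in_iD: "\<And>a. \<beta> a \<in> g2_iD"
    and orth: "\<And>a b. trace (\<beta> a ** \<beta> b) = (if a = b then 1/2 else 0)"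
  shows "(\<Sum>i\<in>UNIV. \<beta> i ** \<beta> i) = mat 1"
    and "(\<Sum>i\<in>UNIV. \<beta> i ** \<beta> a ** \<beta> i) = 0"
proof -
  have "\<forall>i. \<exists>X. \<beta> i = icmat X \<and> X \<in> g2_D"
    using in_iD unfolding g2_iD_def icmat_def by blast
  then obtain A where \<beta>: "\<And>i. \<beta> i = icmat (A i)" and in_D: "\<And>i. A i \<in> g2_D"
    by metis
  have "trace (A a ** A b) = - Re (trace (\<beta> a ** \<beta> b))" for a b
    by (simp add: \<beta> icmat_mult_icmat trace_uminus trace_cmat)
  then have "trace (A a ** A b) = (if a = b then -1/2 else 0)" for a b
    by (simp add: orth)
  note real_casimir = g2_D_orthonormal_casimir[OF in_D this]
  have "(\<Sum>i\<in>UNIV. \<beta> i ** \<beta> i) = - cmat (\<Sum>i\<in>UNIV. A i ** A i)"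
    by (simp add: \<beta> icmat_mult_icmat cmat_sum sum_negf)
  then show "(\<Sum>i\<in>UNIV. \<beta> i ** \<beta> i) = mat 1"
    by (simp add: real_casimir(1) cmat_uminus cmat_one)
  have "(\<Sum>i\<in>UNIV. \<beta> i ** \<beta> a ** \<beta> i) = - icmat (\<Sum>i\<in>UNIV. A i ** A a ** A i)"
    by (simp add: \<beta> icmat_mult_icmat matrix_mult_uminus_left cmat_mult_icmat icmat_sum sum_negf)
  then show "(\<Sum>i\<in>UNIV. \<beta> i ** \<beta> a ** \<beta> i) = 0"
    by (simp add: real_casimir(2) icmat_zero)
qed

section \<open>The channel\<close>

lemma g2_channel_bloch:
  assumes square: "(\<Sum>i\<in>UNIV. \<beta> i ** \<beta> i) = mat 1"
    and sandwich: "\<And>a. (\<Sum>i\<in>UNIV. \<beta> i ** \<beta> a ** \<beta> i) = 0"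
  shows "g2_channel \<beta> p ((1/7) *\<^sub>R (mat 1 + vdot_beta v \<beta>))
    = (1/7) *\<^sub>R (mat 1 + (1 - p) *\<^sub>R vdot_beta v \<beta>)"
proof -
  have "(\<Sum>i\<in>UNIV. \<beta> i ** vdot_beta v \<beta> ** \<beta> i) = 0"
    unfolding vdot_beta_def sandwich_sum_scaleR_sum by (simp add: sandwich)
  then have state: "(\<Sum>i\<in>UNIV. \<beta> i ** ((1/7) *\<^sub>R (mat 1 + vdot_beta v \<beta>)) ** \<beta> i)
      = (1/7) *\<^sub>R mat 1"
    using square
    by (simp add: matrix_add_ldistrib matrix_add_rdistrib matrix_scalar_ac sum.distrib
        flip: scalar_matrix_assoc scaleR_sum_right)
  show ?thesis
    unfolding g2_channel_def state by (simp add: algebra_simps diff_divide_distrib scaleR_diff_left)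
qed

theorem mainTheorem12:
  fixes \<beta> :: "14 \<Rightarrow> complex^7^7"
  assumes basis: "is_real_basis_of \<beta> g2_iD"
    and orth: "\<forall>a b. trace (\<beta> a ** \<beta> b) = (if a = b then 1/2 else 0)"
  shows "(\<Sum>i\<in>UNIV. \<beta> i ** \<beta> i) = mat 1
    \<and> (\<forall>a. (\<Sum>i\<in>UNIV. \<beta> i ** \<beta> a ** \<beta> i) = 0)
    \<and> (\<forall>p::real. 0 \<le> p \<and> p \<le> 1 \<longrightarrow> (\<forall>v::real^14.
         g2_channel \<beta> p ((1/7) *\<^sub>R (mat 1 + vdot_beta v \<beta>))
           = (1/7) *\<^sub>R (mat 1 + (1 - p) *\<^sub>R vdot_beta v \<beta>)))"
proof -
  have "\<beta> a \<in> g2_iD" for a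
    using basis by (simp add: is_real_basis_of_def)
  note casimir = g2_iD_orthonormal_casimir[OF this orth[rule_format]]
  show ?thesis
    using casimir g2_channel_bloch[OF casimir] by blast
qed

end
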